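(* Let $A\in\mathbb{R}^{m\times n}$ with columns $A_1,\dots,A_n$, let $y\in\mathbb{R}^m$, $\gamma>0$ and $\mu\ge 0$. Let $x^*$ be an optimal solution of (CR) with optimal value $\zeta_{CR}$, set $\varepsilon^*=y-Ax^*$ and $\delta_i=(A_i'\varepsilon^* )^2$ for $i=1,\dots,n$, and let $\bar\zeta$ be any number with $\bar\zeta\ge\zeta_R$. Then every optimal solution $(x,z)$ of (MIPR) satisfies, for each $i$: $z_i=0$ if $\zeta_{CR}+\mu-\gamma\delta_i>\bar\zeta$, and $z_i=1$ if $\zeta_{CR}-\mu+\gamma\delta_i>\bar\zeta$.
   Context: For $x_i\in\mathbb{R}$, $z_i\ge 0$ the perspective term $x_i^2/z_i$ is defined with the convention $x_i^2/z_i=0$ if $x_i=z_i=0$ and $x_i^2/z_i=+\infty$ if $z_i=0$, $x_i\neq 0$. (MIPR) is the problem $\zeta_R=\min_{x,z}\ \|y-Ax\|_2^2+\frac1\gamma\sum_{i=1}^n \frac{x_i^2}{z_i}+\mu\sum_{i=1}^n z_i$ subject to $x_i(1-z_i)=0$ for $i=1,\dots,n$, $x\in\mathbb{R}^n$, $z\in\{0,1\}^n$ (a mixed-integer formulation of $\min_x \|y-Ax\|_2^2+\frac1\gamma\|x\|_2^2+\mu\|x\|_0$). (CR) is its convex (perspective) relaxation: $\zeta_{CR}=\min_{x,z}\ \|y-Ax\|_2^2+\frac1\gamma\sum_{i=1}^n \frac{x_i^2}{z_i}+\mu\sum_{i=1}^n z_i$ subject to $x\in\mathbb{R}^n$, $z\in[0,1]^n$;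 an optimal solution $x^*$ means the $x$-part of an optimal pair $(x^*,z^* )$. $A_i'$ denotes the transpose of the $i$-th column of $A$. *)

theory Defs
  imports "HOL-Analysis.Analysis" "HOL-Library.Extended_Real"
begin

text \<open>Vectors in R^n are functions nat => real with components indexed 0..<n;
  the m x n matrix A is a function nat => nat => real, entry (row j, column i) = A j i.\<close>

definition resid :: "nat \<Rightarrow> nat \<Rightarrow> (nat \<Rightarrow> nat \<Rightarrow> real) \<Rightarrow> (nat \<Rightarrow> real) \<Rightarrow> (nat \<Rightarrow> real) \<Rightarrow> nat \<Rightarrow> real" where
  "resid m n A y x = (\<lambda>j. y j - (\<Sum>i<n. A j i * x i))"

definition persp :: "real \<Rightarrow> real \<Rightarrow> ereal" where
  "persp xi zi = (if zi = 0 then (if xi = 0 then 0 else \<infinity>) else ereal (xi\<^sup>2 / zi))"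

definition obj :: "nat \<Rightarrow> nat \<Rightarrow> (nat \<Rightarrow> nat \<Rightarrow> real) \<Rightarrow> (nat \<Rightarrow> real) \<Rightarrow> real \<Rightarrow> real
                   \<Rightarrow> (nat \<Rightarrow> real) \<Rightarrow> (nat \<Rightarrow> real) \<Rightarrow> ereal" where
  "obj m n A y \<gamma> \<mu> x z =
     ereal (\<Sum>j<m. (resid m n A y x j)\<^sup>2)
     + ereal (1 / \<gamma>) * (\<Sum>i<n. persp (x i) (z i))
     + ereal (\<mu> * (\<Sum>i<n. z i))"

definition mipr_feas :: "nat \<Rightarrow> (nat \<Rightarrow> real) \<Rightarrow> (nat \<Rightarrow> real) \<Rightarrow> bool" where
  "mipr_feas n x z \<longleftrightarrow> (\<forall>i<n. (z i = 0 \<or> z i = 1) \<and> x i * (1 - z i) = 0)"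

definition cr_feas :: "nat \<Rightarrow> (nat \<Rightarrow> real) \<Rightarrow> (nat \<Rightarrow> real) \<Rightarrow> bool" where
  "cr_feas n x z \<longleftrightarrow> (\<forall>i<n. 0 \<le> z i \<and> z i \<le> 1)"

definition zeta_R :: "nat \<Rightarrow> nat \<Rightarrow> (nat \<Rightarrow> nat \<Rightarrow> real) \<Rightarrow> (nat \<Rightarrow> real) \<Rightarrow> real \<Rightarrow> real \<Rightarrow> ereal" where
  "zeta_R m n A y \<gamma> \<mu> = (INF p \<in> {(x, z). mipr_feas n x z}. obj m n A y \<gamma> \<mu> (fst p) (snd p))"

definition mipr_opt where
  "mipr_opt m n A y \<gamma> \<mu> x z \<longleftrightarrow> mipr_feas n x z \<and>
     (\<forall>x' z'. mipr_feas n x' z' \<longrightarrow> obj m n A y \<gamma> \<mu> x z \<le> obj m n A y \<gamma> \<mu> x' z')"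

definition cr_opt where
  "cr_opt m n A y \<gamma> \<mu> x z \<longleftrightarrow> cr_feas n x z \<and>
     (\<forall>x' z'. cr_feas n x' z' \<longrightarrow> obj m n A y \<gamma> \<mu> x z \<le> obj m n A y \<gamma> \<mu> x' z')"

end

(*
  On its effective domain the (CR) objective is the smooth convex function
  sqloss x = \<parallel>y - Ax\<parallel>\<^sup>2 plus a separable convex penalty. Optimality of (xs, zs) gives the
  variational inequality  \<nabla>sqloss(xs)\<cdot>(u - xs) + pen(u,w) - pen(xs,zs) \<ge> 0, and because the
  penalty is separable this splits into coordinatewise minimality of
  \<phi>\<^sub>j(u,w) = -2 a\<^sub>j u + u\<^sup>2/(\<gamma> w) + \<mu> w,  where a = A'\<epsilon>*.  Convexity of sqloss then bounds
  every (MIPR) feasible value from below by \<zeta>CR + \<phi>\<^sub>i(x\<^sub>i, z\<^sub>i) - min \<phi>\<^sub>i, and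
  min \<phi>\<^sub>i \<le> min(0, \<mu> - \<gamma> a\<^sub>i\<^sup>2) while \<phi>\<^sub>i(0,0) = 0 and \<phi>\<^sub>i(u,1) \<ge> \<mu> - \<gamma> a\<^sub>i\<^sup>2.
  If z\<^sub>i took the wrong value, the optimal (MIPR) value would thus exceed the upper bound zbar.
*)
theory Submission imports Defs begin

definition persp_real :: "real \<Rightarrow> real \<Rightarrow> real" where
  "persp_real u w = (if w = 0 then 0 else u\<^sup>2 / w)"

lemma persp_real_subadditive:
  assumes "0 \<le> c" "0 \<le> d" "c = 0 \<Longrightarrow> a = 0" "d = 0 \<Longrightarrow> b = 0"
  shows "persp_real (a + b) (c + d) \<le> persp_real a c + persp_real b d"
proof (cases "c = 0 \<or> d = 0")
  case True
  then show ?thesis using assms by (auto simp: persp_real_def)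
next
  case False
  then have c: "c > 0" and d: "d > 0" using assms by auto
  have "(a^2*d + b^2*c)*(c+d) - (a+b)^2 * (c*d) = (a*d - b*c)^2"
    by (simp add: power2_eq_square algebra_simps)
  then have "(a+b)^2 * (c*d) \<le> (a^2*d + b^2*c)*(c+d)"
    by (smt (verit) zero_le_power2)
  then have "(a+b)^2 / (c+d) \<le> a^2/c + b^2/d"
    using c d by (simp add: field_simps)
  then show ?thesis using c d by (simp add: persp_real_def)
qed

lemma persp_real_scale: "0 \<le> s \<Longrightarrow> persp_real (s * u) (s * w) = s * persp_real u w"
  by (auto simp: persp_real_def power2_eq_square)

lemma persp_real_convex:
  assumes "0 \<le> w1" "0 \<le> w2" "w1 = 0 \<Longrightarrow> u1 = 0" "w2 = 0 \<Longrightarrow> u2 = 0" "0 \<le> t" "t \<le> 1"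
  shows "persp_real (u1 + t*(u2-u1)) (w1 + t*(w2-w1))
           \<le> persp_real u1 w1 + t*(persp_real u2 w2 - persp_real u1 w1)"
proof -
  have comb: "u1 + t*(u2-u1) = (1-t)*u1 + t*u2" "w1 + t*(w2-w1) = (1-t)*w1 + t*w2"
    by (simp_all add: algebra_simps)
  have "persp_real ((1-t)*u1 + t*u2) ((1-t)*w1 + t*w2)
          \<le> persp_real ((1-t)*u1) ((1-t)*w1) + persp_real (t*u2) (t*w2)"
    by (rule persp_real_subadditive) (use assms in auto)
  also have "\<dots> = (1-t) * persp_real u1 w1 + t * persp_real u2 w2"
    using assms by (simp add: persp_real_scale)
  finally show ?thesis unfolding comb by (simp add: algebra_simps)
qed

definition sqloss :: "nat \<Rightarrow> nat \<Rightarrow> (nat \<Rightarrow> nat \<Rightarrow> real) \<Rightarrow> (nat \<Rightarrow> real) \<Rightarrow> (nat \<Rightarrow> real) \<Rightarrow> real" where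
  "sqloss m n A y x = (\<Sum>k<m. (resid m n A y x k)\<^sup>2)"

text \<open>The correlation \<open>A\<^sub>j'\<epsilon>\<close> of column \<open>j\<close> with the residual;
  \<open>-2 corr\<close> is the gradient of \<open>sqloss\<close>.\<close>
definition corr :: "nat \<Rightarrow> nat \<Rightarrow> (nat \<Rightarrow> nat \<Rightarrow> real) \<Rightarrow> (nat \<Rightarrow> real) \<Rightarrow> (nat \<Rightarrow> real) \<Rightarrow> nat \<Rightarrow> real" where
  "corr m n A y x j = (\<Sum>k<m. A k j * resid m n A y x k)"

lemma resid_add_scaled:
  "resid m n A y (\<lambda>j. x j + t * d j) k = resid m n A y x k - t * (\<Sum>j<n. A k j * d j)"
  by (simp add: resid_def algebra_simps sum.distrib sum_distrib_left)

lemma sqloss_add_scaled: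
  "sqloss m n A y (\<lambda>j. x j + t * d j) = sqloss m n A y x - 2*t*(\<Sum>j<n. corr m n A y x j * d j)
     + t^2 * (\<Sum>k<m. (\<Sum>j<n. A k j * d j)^2)"
proof -
  have cross: "(\<Sum>k<m. resid m n A y x k * (\<Sum>j<n. A k j * d j)) = (\<Sum>j<n. corr m n A y x j * d j)"
    unfolding corr_def sum_distrib_left sum_distrib_right
    by (subst sum.swap) (simp add: mult_ac)
  show ?thesis
    unfolding sqloss_def resid_add_scaled power2_diff
    by (simp add: sum.distrib sum_subtractf sum_distrib_left[symmetric] cross[symmetric]
        power_mult_distrib algebra_simps) (use cross in \<open>simp add: mult_ac\<close>)
qed

definition penalty :: "nat \<Rightarrow> real \<Rightarrow> real \<Rightarrow> (nat \<Rightarrow> real) \<Rightarrow> (nat \<Rightarrow> real) \<Rightarrow> real" where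
  "penalty n \<gamma> \<mu> x z = (\<Sum>j<n. persp_real (x j) (z j) / \<gamma> + \<mu> * z j)"

definition objr :: "nat \<Rightarrow> nat \<Rightarrow> (nat \<Rightarrow> nat \<Rightarrow> real) \<Rightarrow> (nat \<Rightarrow> real) \<Rightarrow> real \<Rightarrow> real
                   \<Rightarrow> (nat \<Rightarrow> real) \<Rightarrow> (nat \<Rightarrow> real) \<Rightarrow> real" where
  "objr m n A y \<gamma> \<mu> x z = sqloss m n A y x + penalty n \<gamma> \<mu> x z"

definition persp_finite :: "nat \<Rightarrow> (nat \<Rightarrow> real) \<Rightarrow> (nat \<Rightarrow> real) \<Rightarrow> bool" where
  "persp_finite n x z \<longleftrightarrow> (\<forall>j<n. z j = 0 \<longrightarrow> x j = 0)"

definition objr_min :: "nat \<Rightarrow> nat \<Rightarrow> (nat \<Rightarrow> nat \<Rightarrow> real) \<Rightarrow> (nat \<Rightarrow> real) \<Rightarrow> real \<Rightarrow> real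
                   \<Rightarrow> (nat \<Rightarrow> real) \<Rightarrow> (nat \<Rightarrow> real) \<Rightarrow> bool" where
  "objr_min m n A y \<gamma> \<mu> xs zs \<longleftrightarrow> cr_feas n xs zs \<and> persp_finite n xs zs \<and>
     (\<forall>u w. cr_feas n u w \<and> persp_finite n u w \<longrightarrow> objr m n A y \<gamma> \<mu> xs zs \<le> objr m n A y \<gamma> \<mu> u w)"

lemma objr_minD:
  assumes "objr_min m n A y \<gamma> \<mu> xs zs"
  shows "cr_feas n xs zs" "persp_finite n xs zs"
    and "cr_feas n u w \<Longrightarrow> persp_finite n u w \<Longrightarrow> objr m n A y \<gamma> \<mu> xs zs \<le> objr m n A y \<gamma> \<mu> u w"
  using assms by (auto simp: objr_min_def)

lemma obj_eq_objr:
  assumes "cr_feas n x z" "persp_finite n x z"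
  shows "obj m n A y \<gamma> \<mu> x z = ereal (objr m n A y \<gamma> \<mu> x z)"
proof -
  have "(\<Sum>j<n. persp (x j) (z j)) = (\<Sum>j<n. ereal (persp_real (x j) (z j)))"
    using assms by (intro sum.cong) (auto simp: persp_def persp_real_def persp_finite_def)
  then have sum_persp: "(\<Sum>j<n. persp (x j) (z j)) = ereal (\<Sum>j<n. persp_real (x j) (z j))"
    by simp
  have "penalty n \<gamma> \<mu> x z = 1/\<gamma> * (\<Sum>j<n. persp_real (x j) (z j)) + \<mu> * (\<Sum>j<n. z j)"
    by (simp add: penalty_def sum.distrib sum_distrib_left sum_divide_distrib)
  then show ?thesis unfolding obj_def objr_def sum_persp sqloss_def by simp
qed

lemma obj_eq_infinity:
  assumes "\<not> persp_finite n x z" "\<gamma> > 0"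
  shows "obj m n A y \<gamma> \<mu> x z = \<infinity>"
proof -
  obtain j where "j < n" "z j = 0" "x j \<noteq> 0" using assms unfolding persp_finite_def by auto
  then have "(\<Sum>j<n. persp (x j) (z j)) = \<infinity>"
    unfolding sum_Pinfty by (auto simp: persp_def)
  then show ?thesis unfolding obj_def using assms by simp
qed

lemma cr_opt_imp_objr_min:
  assumes "\<gamma> > 0" "cr_opt m n A y \<gamma> \<mu> xs zs"
  shows "objr_min m n A y \<gamma> \<mu> xs zs"
    and "obj m n A y \<gamma> \<mu> xs zs = ereal (objr m n A y \<gamma> \<mu> xs zs)"
proof -
  have feas: "cr_feas n xs zs" using assms by (simp add: cr_opt_def)
  have zero: "cr_feas n (\<lambda>_. 0) (\<lambda>_. 0)" "persp_finite n (\<lambda>_. 0) (\<lambda>_. 0)"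
    by (auto simp: cr_feas_def persp_finite_def)
  have fin: "persp_finite n xs zs"
  proof (rule ccontr)
    assume "\<not> persp_finite n xs zs"
    then have "obj m n A y \<gamma> \<mu> xs zs = \<infinity>" using obj_eq_infinity assms by blast
    moreover have "obj m n A y \<gamma> \<mu> xs zs \<le> obj m n A y \<gamma> \<mu> (\<lambda>_. 0) (\<lambda>_. 0)"
      using assms zero by (simp add: cr_opt_def)
    ultimately show False using obj_eq_objr[OF zero] by simp
  qed
  show val: "obj m n A y \<gamma> \<mu> xs zs = ereal (objr m n A y \<gamma> \<mu> xs zs)"
    by (rule obj_eq_objr[OF feas fin])
  have "objr m n A y \<gamma> \<mu> xs zs \<le> objr m n A y \<gamma> \<mu> u w"
    if "cr_feas n u w" "persp_finite n u w" for u w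
  proof -
    have "obj m n A y \<gamma> \<mu> xs zs \<le> obj m n A y \<gamma> \<mu> u w"
      using assms(2) that(1) by (simp add: cr_opt_def)
    then show ?thesis using val obj_eq_objr[OF that] by simp
  qed
  then show "objr_min m n A y \<gamma> \<mu> xs zs" using feas fin by (simp add: objr_min_def)
qed

lemma mipr_opt_obj_le_zeta_R:
  "mipr_opt m n A y \<gamma> \<mu> x z \<Longrightarrow> obj m n A y \<gamma> \<mu> x z \<le> zeta_R m n A y \<gamma> \<mu>"
  unfolding zeta_R_def by (intro INF_greatest) (auto simp: mipr_opt_def)

lemma mipr_feas_imp_cr_feas:
  "mipr_feas n x z \<Longrightarrow> cr_feas n x z \<and> persp_finite n x z"
  by (auto simp: mipr_feas_def cr_feas_def persp_finite_def)

text \<open>The coordinate function \<open>\<phi>\<^sub>j\<close> (with \<open>a = corr \<dots> j\<close>) obtained by linearizing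
  \<open>sqloss\<close> at the (CR) optimum.\<close>
definition coord_obj :: "real \<Rightarrow> real \<Rightarrow> real \<Rightarrow> real \<Rightarrow> real \<Rightarrow> real" where
  "coord_obj a \<gamma> \<mu> u w = -2*a*u + persp_real u w / \<gamma> + \<mu> * w"

lemma sum_coord_obj_diff:
  "(\<Sum>j<n. coord_obj (a j) \<gamma> \<mu> (u j) (w j)) - (\<Sum>j<n. coord_obj (a j) \<gamma> \<mu> (x j) (z j))
   = -2 * (\<Sum>j<n. a j * (u j - x j)) + penalty n \<gamma> \<mu> u w - penalty n \<gamma> \<mu> x z"
proof -
  have split: "(\<Sum>j<n. coord_obj (a j) \<gamma> \<mu> (u j) (w j)) = -2 * (\<Sum>j<n. a j * u j) + penalty n \<gamma> \<mu> u w"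
    for u w :: "nat \<Rightarrow> real"
    unfolding coord_obj_def penalty_def
    by (simp add: sum.distrib sum_distrib_left add.assoc mult.assoc sum_subtractf sum_negf)
  show ?thesis unfolding split by (simp add: right_diff_distrib sum_subtractf)
qed

lemma nonneg_if_quadratic_perturbation_nonneg:
  fixes c Q :: real
  assumes "\<And>t. 0 < t \<Longrightarrow> t \<le> 1 \<Longrightarrow> 0 \<le> t * c + t^2 * Q"
  shows "0 \<le> c"
proof (rule ccontr)
  assume "\<not> 0 \<le> c"
  then have c: "c < 0" by simp
  define t where "t = min 1 (-c / (2*(\<bar>Q\<bar>+1)))"
  have "-c / (2*(\<bar>Q\<bar>+1)) > 0" using c by (intro divide_pos_pos) auto
  then have t: "0 < t" "t \<le> 1" by (auto simp: t_def)
  have "t * (\<bar>Q\<bar>+1) \<le> -c/(2*(\<bar>Q\<bar>+1)) * (\<bar>Q\<bar>+1)"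
    by (intro mult_right_mono) (auto simp: t_def)
  also have "\<dots> = -c/2" by (simp add: field_simps)
  finally have "t * Q \<le> -c/2" using t by (smt (verit) abs_ge_self mult_left_mono distrib_left)
  then have "t * (c + t*Q) < 0" using c t by (simp add: mult_pos_neg)
  then show False using assms[OF t] by (simp add: power2_eq_square algebra_simps)
qed

lemma cr_feas_segment:
  assumes "cr_feas n x z" "cr_feas n u w" "0 \<le> t" "t \<le> 1"
  shows "cr_feas n (\<lambda>j. x j + t * (u j - x j)) (\<lambda>j. z j + t * (w j - z j))"
  unfolding cr_feas_def
proof (intro allI impI conjI)
  fix j assume "j < n"
  then have "0 \<le> z j" "z j \<le> 1" "0 \<le> w j" "w j \<le> 1" using assms by (auto simp: cr_feas_def)
  moreover have "z j + t * (w j - z j) = (1-t) * z j + t * w j" by (simp add: algebra_simps)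
  ultimately show "0 \<le> z j + t * (w j - z j)" "z j + t * (w j - z j) \<le> 1"
    using assms(3,4) by (simp_all add: convex_bound_le)
qed

lemma persp_finite_segment:
  assumes "cr_feas n x z" "cr_feas n u w" "persp_finite n x z" "persp_finite n u w" "0 \<le> t" "t \<le> 1"
  shows "persp_finite n (\<lambda>j. x j + t * (u j - x j)) (\<lambda>j. z j + t * (w j - z j))"
  unfolding persp_finite_def
proof (intro allI impI)
  fix j assume j: "j < n" and zero: "z j + t * (w j - z j) = 0"
  have "0 \<le> (1-t) * z j" "0 \<le> t * w j" using assms j by (auto simp: cr_feas_def)
  moreover have "z j + t * (w j - z j) = (1-t) * z j + t * w j" by (simp add: algebra_simps)
  ultimately have "(1-t) * z j = 0" "t * w j = 0" using zero by linarith+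
  then have "t = 0 \<or> u j = 0" "t = 1 \<or> x j = 0" using assms j by (auto simp: persp_finite_def)
  then show "x j + t * (u j - x j) = 0" by auto
qed

lemma penalty_segment_le:
  assumes "\<gamma> > 0" "cr_feas n x z" "cr_feas n u w" "persp_finite n x z" "persp_finite n u w"
    "0 \<le> t" "t \<le> 1"
  shows "penalty n \<gamma> \<mu> (\<lambda>j. x j + t * (u j - x j)) (\<lambda>j. z j + t * (w j - z j))
           \<le> penalty n \<gamma> \<mu> x z + t * (penalty n \<gamma> \<mu> u w - penalty n \<gamma> \<mu> x z)"
proof -
  have "penalty n \<gamma> \<mu> (\<lambda>j. x j + t * (u j - x j)) (\<lambda>j. z j + t * (w j - z j))
        \<le> (\<Sum>j<n. (persp_real (x j) (z j) + t*(persp_real (u j) (w j) - persp_real (x j) (z j))) / \<gamma>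
              + \<mu> * (z j + t * (w j - z j)))"
    unfolding penalty_def
  proof (intro sum_mono add_mono divide_right_mono)
    fix j assume "j \<in> {..<n}"
    then show "persp_real (x j + t * (u j - x j)) (z j + t * (w j - z j))
           \<le> persp_real (x j) (z j) + t * (persp_real (u j) (w j) - persp_real (x j) (z j))"
      by (intro persp_real_convex) (use assms in \<open>auto simp: cr_feas_def persp_finite_def\<close>)
  qed (use assms in auto)
  also have "\<dots> = penalty n \<gamma> \<mu> x z + t * (penalty n \<gamma> \<mu> u w - penalty n \<gamma> \<mu> x z)"
    unfolding penalty_def
    by (simp add: sum.distrib sum_subtractf sum_distrib_left algebra_simps add_divide_distrib
        diff_divide_distrib)
  finally show ?thesis .
qed

text \<open>The variational inequality of the minimizer: the convex combination with weight \<open>t\<close>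
  towards \<open>(u, w)\<close> yields \<open>0 \<le> t c + t\<^sup>2 Q\<close>, with \<open>c\<close> the difference of the two sums.\<close>
lemma objr_min_imp_coord_sum_min:
  assumes "\<gamma> > 0" and opt: "objr_min m n A y \<gamma> \<mu> xs zs"
    and uw: "cr_feas n u w" "persp_finite n u w"
  shows "(\<Sum>j<n. coord_obj (corr m n A y xs j) \<gamma> \<mu> (xs j) (zs j))
         \<le> (\<Sum>j<n. coord_obj (corr m n A y xs j) \<gamma> \<mu> (u j) (w j))"
proof -
  define a where "a = corr m n A y xs"
  define S where "S = (\<Sum>j<n. a j * (u j - xs j))"
  define Q where "Q = (\<Sum>k<m. (\<Sum>j<n. A k j * (u j - xs j))^2)"
  define \<Delta>pen where "\<Delta>pen = penalty n \<gamma> \<mu> u w - penalty n \<gamma> \<mu> xs zs"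
  have "0 \<le> t * (-2 * S + \<Delta>pen) + t^2 * Q" if t: "0 < t" "t \<le> 1" for t
  proof -
    define xt where "xt = (\<lambda>j. xs j + t * (u j - xs j))"
    define zt where "zt = (\<lambda>j. zs j + t * (w j - zs j))"
    have "sqloss m n A y xt = sqloss m n A y xs - 2*t*S + t^2 * Q"
      unfolding xt_def a_def Q_def S_def by (rule sqloss_add_scaled)
    moreover have "penalty n \<gamma> \<mu> xt zt \<le> penalty n \<gamma> \<mu> xs zs + t * \<Delta>pen"
      unfolding xt_def zt_def \<Delta>pen_def using assms(1) objr_minD(1,2)[OF opt] uw t
      by (intro penalty_segment_le) auto
    moreover have "objr m n A y \<gamma> \<mu> xs zs \<le> objr m n A y \<gamma> \<mu> xt zt"
      unfolding xt_def zt_def using objr_minD[OF opt] uw t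
      by (intro objr_minD(3)[OF opt] cr_feas_segment persp_finite_segment) auto
    ultimately show ?thesis by (simp add: objr_def algebra_simps)
  qed
  then have "0 \<le> -2 * S + \<Delta>pen" by (rule nonneg_if_quadratic_perturbation_nonneg)
  then show ?thesis
    using sum_coord_obj_diff[of a \<gamma> \<mu> u w n xs zs] unfolding S_def \<Delta>pen_def a_def by simp
qed

lemma objr_min_imp_coord_min:
  assumes "\<gamma> > 0" and opt: "objr_min m n A y \<gamma> \<mu> xs zs"
    and j: "j < n" and w: "0 \<le> w" "w \<le> 1" "w = 0 \<Longrightarrow> u = 0"
  shows "coord_obj (corr m n A y xs j) \<gamma> \<mu> (xs j) (zs j) \<le> coord_obj (corr m n A y xs j) \<gamma> \<mu> u w"
proof -
  define f where "f = (\<lambda>k. coord_obj (corr m n A y xs k) \<gamma> \<mu>)"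
  have "(\<Sum>k<n. f k (xs k) (zs k)) \<le> (\<Sum>k<n. f k ((xs(j:=u)) k) ((zs(j:=w)) k))"
    unfolding f_def using objr_minD(1,2)[OF opt] w
    by (intro objr_min_imp_coord_sum_min[OF assms(1) opt])
       (auto simp: cr_feas_def persp_finite_def)
  moreover have "(\<Sum>k<n. f k ((xs(j:=u)) k) ((zs(j:=w)) k))
                 = f j u w + (\<Sum>k\<in>{..<n}-{j}. f k (xs k) (zs k))"
    using j by (subst sum.remove[of _ j]) (auto intro!: sum.cong)
  moreover have "(\<Sum>k<n. f k (xs k) (zs k)) = f j (xs j) (zs j) + (\<Sum>k\<in>{..<n}-{j}. f k (xs k) (zs k))"
    using j by (subst sum.remove[of _ j]) auto
  ultimately show ?thesis unfolding f_def by simp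
qed

text \<open>Convexity of \<open>sqloss\<close> and coordinatewise minimality of the (CR) optimum leave only the
  \<open>i\<close>-th coordinate gap in the lower bound.\<close>
lemma objr_ge_coord_gap:
  assumes "\<gamma> > 0" and opt: "objr_min m n A y \<gamma> \<mu> xs zs"
    and uw: "cr_feas n u w" "persp_finite n u w" and i: "i < n"
  defines "a \<equiv> corr m n A y xs"
  shows "objr m n A y \<gamma> \<mu> xs zs + coord_obj (a i) \<gamma> \<mu> (u i) (w i) - coord_obj (a i) \<gamma> \<mu> (xs i) (zs i)
         \<le> objr m n A y \<gamma> \<mu> u w"
proof -
  define gap where "gap = (\<lambda>j. coord_obj (a j) \<gamma> \<mu> (u j) (w j) - coord_obj (a j) \<gamma> \<mu> (xs j) (zs j))"
  have "sqloss m n A y (\<lambda>j. xs j + 1 * (u j - xs j)) = sqloss m n A y xs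
          - 2*1*(\<Sum>j<n. a j * (u j - xs j)) + 1^2 * (\<Sum>k<m. (\<Sum>j<n. A k j * (u j - xs j))^2)"
    unfolding a_def by (rule sqloss_add_scaled)
  then have "sqloss m n A y xs - 2 * (\<Sum>j<n. a j * (u j - xs j)) \<le> sqloss m n A y u"
    by (simp add: sum_nonneg)
  moreover have "gap i \<le> (\<Sum>j<n. gap j)"
  proof (rule member_le_sum)
    fix j assume "j \<in> {..<n} - {i}"
    then show "0 \<le> gap j"
      unfolding gap_def a_def using uw
      by (auto intro!: objr_min_imp_coord_min[OF assms(1) opt] simp: cr_feas_def persp_finite_def)
  qed (use i in auto)
  moreover have "(\<Sum>j<n. gap j)
      = -2 * (\<Sum>j<n. a j * (u j - xs j)) + penalty n \<gamma> \<mu> u w - penalty n \<gamma> \<mu> xs zs"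
    unfolding gap_def sum_subtractf by (rule sum_coord_obj_diff)
  ultimately show ?thesis unfolding gap_def objr_def by linarith
qed

lemma coord_obj_zero: "coord_obj a \<gamma> \<mu> 0 0 = 0"
  by (simp add: coord_obj_def persp_real_def)

lemma coord_obj_one_eq:
  "\<gamma> > 0 \<Longrightarrow> coord_obj a \<gamma> \<mu> u 1 = \<mu> - \<gamma> * a\<^sup>2 + (u - \<gamma> * a)\<^sup>2 / \<gamma>"
  by (simp add: coord_obj_def persp_real_def power2_eq_square field_simps)

lemma coord_obj_one_ge: "\<gamma> > 0 \<Longrightarrow> \<mu> - \<gamma> * a\<^sup>2 \<le> coord_obj a \<gamma> \<mu> u 1"
  by (simp add: coord_obj_one_eq)

theorem proposition1:
  fixes m n :: nat and A :: "nat \<Rightarrow> nat \<Rightarrow> real" and y :: "nat \<Rightarrow> real"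
    and \<gamma> \<mu> :: real and xs zs :: "nat \<Rightarrow> real" and zbar :: real
    and x z :: "nat \<Rightarrow> real" and i :: nat
  assumes "\<gamma> > 0" and "\<mu> \<ge> 0"
    and "cr_opt m n A y \<gamma> \<mu> xs zs"
    and "ereal zbar \<ge> zeta_R m n A y \<gamma> \<mu>"
    and "mipr_opt m n A y \<gamma> \<mu> x z"
    and "i < n"
  defines "\<delta> \<equiv> (\<Sum>j<m. A j i * resid m n A y xs j)\<^sup>2"
  defines "\<zeta>CR \<equiv> obj m n A y \<gamma> \<mu> xs zs"
  shows "(\<zeta>CR + ereal (\<mu> - \<gamma> * \<delta>) > ereal zbar \<longrightarrow> z i = 0)
       \<and> (\<zeta>CR + ereal (- \<mu> + \<gamma> * \<delta>) > ereal zbar \<longrightarrow> z i = 1)"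
proof -
  define \<phi> where "\<phi> = coord_obj (corr m n A y xs i) \<gamma> \<mu>"
  have \<delta>: "\<delta> = (corr m n A y xs i)\<^sup>2" unfolding \<delta>_def corr_def by simp
  have opt: "objr_min m n A y \<gamma> \<mu> xs zs" and \<zeta>CR: "\<zeta>CR = ereal (objr m n A y \<gamma> \<mu> xs zs)"
    using cr_opt_imp_objr_min[OF assms(1,3)] unfolding \<zeta>CR_def by blast+
  have feas: "mipr_feas n x z" using assms(5) by (simp add: mipr_opt_def)
  then have cr_x: "cr_feas n x z" "persp_finite n x z" by (simp_all add: mipr_feas_imp_cr_feas)
  have "objr m n A y \<gamma> \<mu> x z \<le> zbar"
    using obj_eq_objr[OF cr_x] mipr_opt_obj_le_zeta_R[OF assms(5)] assms(4)
    by (metis ereal_less_eq(3) order.trans)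
  moreover have "objr m n A y \<gamma> \<mu> xs zs + \<phi> (x i) (z i) - \<phi> (xs i) (zs i) \<le> objr m n A y \<gamma> \<mu> x z"
    unfolding \<phi>_def by (rule objr_ge_coord_gap[OF assms(1) opt cr_x assms(6)])
  moreover have "\<phi> (xs i) (zs i) \<le> 0" "\<phi> (xs i) (zs i) \<le> \<mu> - \<gamma> * \<delta>"
    using objr_min_imp_coord_min[OF assms(1) opt assms(6), of 0 0]
      objr_min_imp_coord_min[OF assms(1) opt assms(6), of 1 "\<gamma> * corr m n A y xs i"]
    unfolding \<phi>_def \<delta> coord_obj_zero coord_obj_one_eq[OF assms(1)] by simp_all
  moreover have "z i = 0 \<and> \<phi> (x i) (z i) = 0 \<or> z i = 1 \<and> \<mu> - \<gamma> * \<delta> \<le> \<phi> (x i) (z i)"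
    using feas assms(6) unfolding \<phi>_def \<delta>
    by (auto simp: mipr_feas_def coord_obj_zero coord_obj_one_ge[OF assms(1)])
  ultimately show ?thesis unfolding \<zeta>CR by auto
qed

end
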